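(* Let $H$ be a countably infinite group. Then the set $D(H)=D_L(H)\cap D_R(H)$ is non-empty and $H$-bi-invariant.
   Context: $2^H$ denotes the set of all subsets of $H$ with the product topology (pointwise convergence of characteristic functions). $H$ acts on $2^H$ by left multiplication $S\mapsto hS$ (the left action) and by right multiplication $S\mapsto Sh$ (the right action). $D_L(H)$ (resp. $D_R(H)$) is the set of $S\subseteq H$ whose orbit under the left (resp. right) action, $\{hS:h\in H\}$ (resp. $\{Sh:h\in H\}$), is dense in $2^H$. A subset of $2^H$ is $H$-bi-invariant if it is invariant under both the left and the right action. *)

theory Defs
  imports "HOL-Analysis.Analysis"
begin

text \<open>The space 2^H: subsets of H identified with their characteristic functions
  H \<Rightarrow> bool, carrying the product of discrete topologies on bool
  (topology of pointwise convergence).\<close>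
definition cantor_top :: "('a \<Rightarrow> bool) topology" where
  "cantor_top = product_topology (\<lambda>_. discrete_topology (UNIV :: bool set)) UNIV"

text \<open>Left and right translates of a subset (group written additively, not
  necessarily commutative: class group_add).\<close>
definition ltrans :: "'a::group_add \<Rightarrow> 'a set \<Rightarrow> 'a set" where
  "ltrans h S = (\<lambda>s. h + s) ` S"

definition rtrans :: "'a set \<Rightarrow> 'a::group_add \<Rightarrow> 'a set" where
  "rtrans S h = (\<lambda>s. s + h) ` S"

definition D_L :: "'a::group_add set set" where
  "D_L = {S. cantor_top closure_of ((\<lambda>h. (\<lambda>x. x \<in> ltrans h S)) ` UNIV) = topspace cantor_top}"

definition D_R :: "'a::group_add set set" where
  "D_R = {S. cantor_top closure_of ((\<lambda>h. (\<lambda>x. x \<in> rtrans S h)) ` UNIV) = topspace cantor_top}"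

definition bi_invariant :: "'a::group_add set set \<Rightarrow> bool" where
  "bi_invariant \<A> \<longleftrightarrow> (\<forall>S\<in>\<A>. \<forall>h. ltrans h S \<in> \<A> \<and> rtrans S h \<in> \<A>)"

end

theory Submission
  imports Defs
begin

(* A family X of subsets is dense in 2^H exactly when it realises every finite pattern: for
   each finite F and each f : F -> bool some member agrees with f on F. Left and right
   translations commute, so translating S on one side reindexes the coordinates of its orbit
   under the other side by a bijection of H, which preserves density, and merely
   reparametrises its orbit under the same side; hence D_L and D_R are bi-invariant.
   To find a member of both, enumerate all finite patterns together with a side. As H is
   infinite, translates g_n can be chosen greedily so that the supports g_n^-1 F_n (left
   patterns) resp. F_n g_n^-1 (right patterns) are pairwise disjoint; the union of the
   correspondingly translated patterns then realises every pattern on both sides. *)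

lemma topspace_cantor_top [simp]: "topspace cantor_top = UNIV"
  by (simp add: cantor_top_def)

lemma dense_in_cantor_top_iff:
  fixes X :: "('a \<Rightarrow> bool) set"
  shows "cantor_top closure_of X = UNIV \<longleftrightarrow> (\<forall>F f. finite F \<longrightarrow> (\<exists>x\<in>X. \<forall>i\<in>F. x i = f i))"
proof (intro iffI allI impI)
  fix F :: "'a set" and f :: "'a \<Rightarrow> bool"
  assume dense: "cantor_top closure_of X = UNIV" and "finite F"
  define C where "C = (\<Pi>\<^sub>E i\<in>UNIV. if i \<in> F then {f i} else UNIV)"
  have "openin cantor_top C"
    unfolding C_def cantor_top_def
    by (rule product_topology_basis) (auto intro: finite_subset[OF _ \<open>finite F\<close>])
  moreover have "f \<in> C"
    by (simp add: C_def PiE_iff)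
  ultimately obtain x where "x \<in> X" "x \<in> C"
    using dense by (metis UNIV_I in_closure_of)
  moreover have "x i = f i" if "i \<in> F" for i
    using \<open>x \<in> C\<close> that by (auto simp: C_def PiE_iff dest!: spec[of _ i])
  ultimately show "\<exists>x\<in>X. \<forall>i\<in>F. x i = f i"
    by blast
next
  assume patterns: "\<forall>F f. finite F \<longrightarrow> (\<exists>x\<in>X. \<forall>i\<in>F. x i = f i)"
  have "f \<in> cantor_top closure_of X" for f
    unfolding in_closure_of
  proof (intro conjI allI impI)
    fix T assume "f \<in> T \<and> openin cantor_top T"
    then obtain U where U: "finite {i. U i \<noteq> UNIV}" "f \<in> Pi\<^sub>E UNIV U" "Pi\<^sub>E UNIV U \<subseteq> T"
      using product_topology_open_contains_basis[of "\<lambda>_. discrete_topology UNIV" UNIV T f]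
      unfolding cantor_top_def topspace_discrete_topology by blast
    then obtain x where "x \<in> X" and x: "\<forall>i\<in>{i. U i \<noteq> UNIV}. x i = f i"
      using patterns by blast
    have "x i \<in> U i" for i
    proof (cases "U i = UNIV")
      case False
      with U(2) x show ?thesis
        by (simp add: PiE_iff)
    qed simp
    then have "x \<in> Pi\<^sub>E UNIV U"
      by (simp add: PiE_iff)
    with \<open>x \<in> X\<close> U(3) show "\<exists>x. x \<in> X \<and> x \<in> T"
      by blast
  qed simp
  then show "cantor_top closure_of X = UNIV"
    by blast
qed

lemma dense_in_cantor_top_reindex:
  fixes X :: "('a \<Rightarrow> bool) set" and p :: "'b \<Rightarrow> 'a"
  assumes "cantor_top closure_of X = UNIV" and "inj p"
  shows "cantor_top closure_of ((\<lambda>x. x \<circ> p) ` X) = UNIV"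
  unfolding dense_in_cantor_top_iff
proof (intro allI impI)
  fix F :: "'b set" and f :: "'b \<Rightarrow> bool"
  assume "finite F"
  then obtain x where "x \<in> X" and x: "\<forall>j\<in>p ` F. x j = f (inv p j)"
    using assms(1)[unfolded dense_in_cantor_top_iff, rule_format, of "p ` F" "\<lambda>j. f (inv p j)"]
    by blast
  then have "\<forall>i\<in>F. (x \<circ> p) i = f i"
    using \<open>inj p\<close> by simp
  with \<open>x \<in> X\<close> show "\<exists>y\<in>(\<lambda>x. x \<circ> p) ` X. \<forall>i\<in>F. y i = f i"
    by blast
qed

lemma mem_ltrans: "x \<in> ltrans h S \<longleftrightarrow> -h + x \<in> S"
proof -
  have "x = h + s \<longleftrightarrow> s = -h + x" for s
    by (metis add_minus_cancel minus_add_cancel)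
  then show ?thesis
    by (simp add: ltrans_def image_iff)
qed

lemma mem_rtrans: "x \<in> rtrans S h \<longleftrightarrow> x + -h \<in> S"
proof -
  have "x = s + h \<longleftrightarrow> s = x + -h" for s
    by (metis diff_add_cancel diff_conv_add_uminus)
  then show ?thesis
    by (simp add: rtrans_def image_iff del: add_uminus_conv_diff)
qed

lemma ltrans_ltrans: "ltrans h (ltrans k S) = ltrans (h + k) S"
  by (simp add: ltrans_def image_image add.assoc)

lemma rtrans_rtrans: "rtrans (rtrans S k) h = rtrans S (k + h)"
  by (simp add: rtrans_def image_image add.assoc)

lemma ltrans_rtrans: "ltrans h (rtrans S k) = rtrans (ltrans h S) k"
  by (simp add: ltrans_def rtrans_def image_image add.assoc)

lemma range_reindex_add_right: "range (\<lambda>h. f (h + k)) = range (f :: 'a::group_add \<Rightarrow> 'b)"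
proof -
  have "surj (\<lambda>h::'a. h + k)"
    by (rule surjI[of _ "\<lambda>h. h + -k"]) (simp add: add.assoc)
  then show ?thesis
    by (metis image_image)
qed

lemma range_reindex_add_left: "range (\<lambda>h. f (k + h)) = range (f :: 'a::group_add \<Rightarrow> 'b)"
proof -
  have "surj (\<lambda>h::'a. k + h)"
    by (rule surjI[of _ "\<lambda>h. -k + h"]) (simp add: add.assoc[symmetric])
  then show ?thesis
    by (metis image_image)
qed

lemma ltrans_in_D_L: "S \<in> D_L \<Longrightarrow> ltrans k S \<in> D_L"
  by (simp add: D_L_def ltrans_ltrans range_reindex_add_right[where f = "\<lambda>h x. x \<in> ltrans h S"])

lemma rtrans_in_D_R: "S \<in> D_R \<Longrightarrow> rtrans S k \<in> D_R"
  by (simp add: D_R_def rtrans_rtrans range_reindex_add_left[where f = "\<lambda>h x. x \<in> rtrans S h"])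

lemma rtrans_in_D_L:
  assumes "S \<in> D_L"
  shows "rtrans S k \<in> D_L"
proof -
  have "(\<lambda>x. x \<in> ltrans h (rtrans S k)) = (\<lambda>x. x \<in> ltrans h S) \<circ> (\<lambda>x. x + -k)" for h
    by (simp add: fun_eq_iff ltrans_rtrans mem_rtrans del: add_uminus_conv_diff)
  then have orbit: "range (\<lambda>h x. x \<in> ltrans h (rtrans S k))
      = (\<lambda>y. y \<circ> (\<lambda>x. x + -k)) ` range (\<lambda>h x. x \<in> ltrans h S)"
    by (simp only: image_image)
  have "inj (\<lambda>x::'a. x + -k)"
    by (simp add: inj_def)
  with assms show ?thesis
    unfolding D_L_def mem_Collect_eq topspace_cantor_top orbit
    by (rule dense_in_cantor_top_reindex)
qed

lemma ltrans_in_D_R: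
  assumes "S \<in> D_R"
  shows "ltrans k S \<in> D_R"
proof -
  have "(\<lambda>x. x \<in> rtrans (ltrans k S) h) = (\<lambda>x. x \<in> rtrans S h) \<circ> (\<lambda>x. -k + x)" for h
    by (simp add: fun_eq_iff ltrans_rtrans[symmetric] mem_ltrans)
  then have orbit: "range (\<lambda>h x. x \<in> rtrans (ltrans k S) h)
      = (\<lambda>y. y \<circ> (\<lambda>x. -k + x)) ` range (\<lambda>h x. x \<in> rtrans S h)"
    by (simp only: image_image)
  have "inj (\<lambda>x::'a. -k + x)"
    by (simp add: inj_def)
  with assms show ?thesis
    unfolding D_R_def mem_Collect_eq topspace_cantor_top orbit
    by (rule dense_in_cantor_top_reindex)
qed

lemma bi_invariant_Int: "bi_invariant A \<Longrightarrow> bi_invariant B \<Longrightarrow> bi_invariant (A \<inter> B)"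
  by (simp add: bi_invariant_def)

lemma bi_invariant_D_L: "bi_invariant D_L"
  by (simp add: bi_invariant_def ltrans_in_D_L rtrans_in_D_L)

lemma bi_invariant_D_R: "bi_invariant D_R"
  by (simp add: bi_invariant_def ltrans_in_D_R rtrans_in_D_R)

lemma D_L_iff_patterns: "S \<in> D_L \<longleftrightarrow> (\<forall>F f. finite F \<longrightarrow> (\<exists>h. \<forall>i\<in>F. (-h + i \<in> S) = f i))"
  by (simp add: D_L_def dense_in_cantor_top_iff mem_ltrans)

lemma D_R_iff_patterns: "S \<in> D_R \<longleftrightarrow> (\<forall>F f. finite F \<longrightarrow> (\<exists>h. \<forall>i\<in>F. (i + -h \<in> S) = f i))"
  by (simp add: D_R_def dense_in_cantor_top_iff mem_rtrans del: add_uminus_conv_diff)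

lemma ex_image_avoiding:
  fixes \<tau> :: "'g \<Rightarrow> 'a \<Rightarrow> 'b"
  assumes "infinite (UNIV :: 'g set)" and "finite F" and "finite U"
    and "\<And>x. inj (\<lambda>g. \<tau> g x)"
  shows "\<exists>g. \<tau> g ` F \<inter> U = {}"
proof -
  have "finite (\<Union>x\<in>F. (\<lambda>g. \<tau> g x) -` U)"
    using assms(2-4) by (simp add: finite_vimageI)
  then obtain g where "g \<notin> (\<Union>x\<in>F. (\<lambda>g. \<tau> g x) -` U)"
    using ex_new_if_finite[OF assms(1)] by blast
  then show ?thesis
    by blast
qed

lemma ex_disjoint_family_avoiding:
  fixes A :: "nat \<Rightarrow> 'a set set"
  assumes avoid: "\<And>n U. finite U \<Longrightarrow> \<exists>a\<in>A n. a \<inter> U = {}"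
    and fin: "\<And>n a. a \<in> A n \<Longrightarrow> finite a"
  shows "\<exists>B. (\<forall>n. B n \<in> A n) \<and> disjoint_family B"
proof -
  define pick where "pick U n = (SOME a. a \<in> A n \<and> a \<inter> U = {})" for U n
  have pick: "pick U n \<in> A n" "pick U n \<inter> U = {}" if "finite U" for U n
    using someI_ex[OF avoid[OF that, of n, unfolded Bex_def]] by (simp_all add: pick_def)
  define used where "used = rec_nat {} (\<lambda>n U. U \<union> pick U n)"
  have used_0: "used 0 = {}" and used_Suc: "used (Suc n) = used n \<union> pick (used n) n" for n
    by (simp_all add: used_def)
  have used_finite: "finite (used n)" for n
    by (induction n) (simp_all add: used_0 used_Suc fin[OF pick(1)])
  define B where "B n = pick (used n) n" for n
  have "incseq used"
    by (rule incseq_SucI) (simp add: used_Suc)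
  then have B_used: "B m \<subseteq> used n" if "m < n" for m n
    using that by (metis B_def Suc_leI Un_upper2 incseq_def order_trans used_Suc)
  have "B m \<inter> B n = {}" if "m < n" for m n
    using B_used[OF that] pick(2)[OF used_finite, of n] by (auto simp: B_def)
  then have "disjoint_family B"
    unfolding disjoint_family_on_def by (metis Int_commute linorder_neqE_nat)
  moreover have "B n \<in> A n" for n
    by (simp add: B_def pick used_finite)
  ultimately show ?thesis
    by blast
qed

lemma disjoint_family_UN_Int:
  assumes "disjoint_family B" and "\<And>m. P m \<subseteq> B m"
  shows "(\<Union>m. P m) \<inter> B n = P n"
proof -
  have "m = n" if "x \<in> P m" "x \<in> B n" for x m
    using that disjoint_family_onD[OF assms(1), of m n] assms(2)[of m] by blast
  then show ?thesis
    using assms(2)[of n] by blast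
qed

lemma ex_enumeration_finite_patterns:
  fixes \<Sigma> :: "'b set"
  assumes "countable (UNIV :: 'a set)" and "countable \<Sigma>" and "s\<^sub>0 \<in> \<Sigma>"
  obtains F P :: "nat \<Rightarrow> 'a set" and \<sigma> :: "nat \<Rightarrow> 'b"
  where "\<And>n. finite (F n)" and "\<And>n. P n \<subseteq> F n" and "\<And>n. \<sigma> n \<in> \<Sigma>"
    and "\<And>F' P' s. finite F' \<Longrightarrow> P' \<subseteq> F' \<Longrightarrow> s \<in> \<Sigma> \<Longrightarrow> \<exists>n. F n = F' \<and> P n = P' \<and> \<sigma> n = s"
proof -
  define patterns :: "(('a set \<times> 'a set) \<times> 'b) set"
    where "patterns = {(F, P). finite F \<and> P \<subseteq> F} \<times> \<Sigma>"
  define finite_sets where "finite_sets = {F::'a set. finite F}"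
  have "countable finite_sets"
    using countable_Collect_finite_subset[OF assms(1)] by (simp add: finite_sets_def)
  then have "countable ((finite_sets \<times> finite_sets) \<times> \<Sigma>)"
    using assms(2) by (intro countable_SIGMA) simp_all
  moreover have "patterns \<subseteq> (finite_sets \<times> finite_sets) \<times> \<Sigma>"
    by (auto simp: patterns_def finite_sets_def dest: finite_subset)
  ultimately have "countable patterns"
    using countable_subset by blast
  moreover have "(({}, {}), s\<^sub>0) \<in> patterns"
    by (simp add: patterns_def assms(3))
  ultimately obtain e :: "nat \<Rightarrow> _" where e: "range e = patterns"
    using range_from_nat_into by (metis empty_iff)
  show thesis
  proof (rule that[of "\<lambda>n. fst (fst (e n))" "\<lambda>n. snd (fst (e n))" "\<lambda>n. snd (e n)"])
    fix n
    show "finite (fst (fst (e n)))" "snd (fst (e n)) \<subseteq> fst (fst (e n))" "snd (e n) \<in> \<Sigma>"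
      using rangeI[of e n] by (auto simp: e patterns_def)
  next
    fix F' P' :: "'a set" and s assume "finite F'" "P' \<subseteq> F'" "s \<in> \<Sigma>"
    then have "((F', P'), s) \<in> range e"
      by (simp add: e patterns_def)
    then obtain n where "e n = ((F', P'), s)"
      by (metis rangeE)
    then show "\<exists>n. fst (fst (e n)) = F' \<and> snd (fst (e n)) = P' \<and> snd (e n) = s"
      by (intro exI[of _ n]) simp
  qed
qed

lemma ex_set_realising_translated_patterns:
  fixes \<tau> :: "nat \<Rightarrow> 'g \<Rightarrow> 'a \<Rightarrow> 'b"
  assumes "infinite (UNIV :: 'g set)" and F_finite: "\<And>n. finite (F n)" and P_F: "\<And>n. P n \<subseteq> F n"
    and \<tau>_inj: "\<And>n g. inj (\<tau> n g)" and \<tau>_inj_translation: "\<And>n x. inj (\<lambda>g. \<tau> n g x)"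
  shows "\<exists>g S. \<forall>n. \<forall>x\<in>F n. \<tau> n (g n) x \<in> S \<longleftrightarrow> x \<in> P n"
proof -
  define A where "A n = range (\<lambda>g. \<tau> n g ` F n)" for n
  have A_avoiding: "\<exists>a\<in>A n. a \<inter> U = {}" if "finite U" for n U
    using ex_image_avoiding[OF assms(1) F_finite that \<tau>_inj_translation] by (auto simp: A_def)
  have A_finite: "finite a" if "a \<in> A n" for n a
    using that F_finite by (auto simp: A_def)
  have "\<exists>B. (\<forall>n. B n \<in> A n) \<and> disjoint_family B"
    using A_avoiding A_finite by (rule ex_disjoint_family_avoiding)
  then obtain B where B: "\<And>n. B n \<in> A n" and "disjoint_family B"
    by blast
  have "\<exists>h. B n = \<tau> n h ` F n" for n
    using B[of n] by (auto simp: A_def)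
  then obtain g where g: "\<And>n. B n = \<tau> n (g n) ` F n"
    by metis
  define S where "S = (\<Union>n. \<tau> n (g n) ` P n)"
  have S_Int: "S \<inter> B n = \<tau> n (g n) ` P n" for n
    unfolding S_def using \<open>disjoint_family B\<close> by (rule disjoint_family_UN_Int) (simp add: g P_F image_mono)
  have "\<tau> n (g n) x \<in> S \<longleftrightarrow> x \<in> P n" if "x \<in> F n" for n x
  proof -
    have "\<tau> n (g n) x \<in> S \<longleftrightarrow> \<tau> n (g n) x \<in> S \<inter> B n"
      using that by (simp add: g)
    also have "\<dots> \<longleftrightarrow> x \<in> P n"
      by (simp only: S_Int inj_image_mem_iff[OF \<tau>_inj])
    finally show ?thesis .
  qed
  then show ?thesis
    by blast
qed

lemma ex_mem_D_L_Int_D_R: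
  assumes "countable (UNIV :: 'a::group_add set)" and "infinite (UNIV :: 'a set)"
  shows "\<exists>S::'a set. S \<in> D_L \<inter> D_R"
proof -
  define left right :: "'a \<Rightarrow> 'a \<Rightarrow> 'a" where "left h i = -h + i" and "right h i = i + -h" for h i
  have "countable {left, right}" and "left \<in> {left, right}"
    by simp_all
  then obtain F P :: "nat \<Rightarrow> 'a set" and \<tau> :: "nat \<Rightarrow> 'a \<Rightarrow> 'a \<Rightarrow> 'a"
    where F_finite: "\<And>n. finite (F n)" and P_F: "\<And>n. P n \<subseteq> F n" and \<tau>: "\<And>n. \<tau> n \<in> {left, right}"
      and every_pattern: "\<And>F' P' \<sigma>. finite F' \<Longrightarrow> P' \<subseteq> F' \<Longrightarrow> \<sigma> \<in> {left, right}
        \<Longrightarrow> \<exists>n. F n = F' \<and> P n = P' \<and> \<tau> n = \<sigma>"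
    by (rule ex_enumeration_finite_patterns[OF assms(1)]) blast
  have "inj (\<sigma> g) \<and> inj (\<lambda>g. \<sigma> g x)" if "\<sigma> \<in> {left, right}" for \<sigma> g x
    using that by (auto simp: left_def right_def inj_def simp del: add_uminus_conv_diff)
  then have "inj (\<tau> n g)" and "inj (\<lambda>g. \<tau> n g x)" for n g x
    using \<tau> by blast+
  then have "\<exists>g S. \<forall>n. \<forall>x\<in>F n. \<tau> n (g n) x \<in> S \<longleftrightarrow> x \<in> P n"
    by (rule ex_set_realising_translated_patterns[OF assms(2) F_finite P_F])
  then obtain g S where S: "\<And>n x. x \<in> F n \<Longrightarrow> \<tau> n (g n) x \<in> S \<longleftrightarrow> x \<in> P n"
    by blast
  have realise: "\<exists>h. \<forall>i\<in>F'. (\<sigma> h i \<in> S) = f i" if F': "finite F'" and \<sigma>: "\<sigma> \<in> {left, right}" for F' f \<sigma>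
  proof -
    obtain n where "F n = F'" "P n = {i\<in>F'. f i}" "\<tau> n = \<sigma>"
      using every_pattern[OF F' _ \<sigma>, of "{i\<in>F'. f i}"] by blast
    then show ?thesis
      using S[of _ n] by auto
  qed
  have "S \<in> D_L"
    unfolding D_L_iff_patterns using realise[where \<sigma> = left] by (simp add: left_def)
  moreover have "S \<in> D_R"
    unfolding D_R_iff_patterns using realise[where \<sigma> = right] by (simp add: right_def)
  ultimately show ?thesis
    by blast
qed

theorem proposition3p2:
  assumes "countable (UNIV :: 'a::group_add set)"
    and "infinite (UNIV :: 'a set)"
  shows "(D_L \<inter> D_R :: 'a set set) \<noteq> {} \<and> bi_invariant (D_L \<inter> D_R :: 'a set set)"
proof
  show "(D_L \<inter> D_R :: 'a set set) \<noteq> {}"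
    using ex_mem_D_L_Int_D_R[OF assms] by blast
  show "bi_invariant (D_L \<inter> D_R :: 'a set set)"
    using bi_invariant_D_L bi_invariant_D_R by (rule bi_invariant_Int)
qed

end
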